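(* Let $\mathcal{X},\mathcal{Y},\mathcal{Z}$ be finite alphabets and $(X,Y,Z)\sim P_X(x)P_{Y|X}(y|x)P_{Z|X}(z|x)$. Define $\mathcal{A}_1$ as the set of all tuples $(R_I,R_S,R_J,R_L)$ such that, for some random variable $U$ on a finite alphabet $\mathcal{U}$ with $|\mathcal{U}|\le|\mathcal{Y}|+2$ forming a Markov chain $Z-X-Y-U$, $R_I+R_S\le I(Z;U)$, $R_J\ge I(Y;U)-I(Z;U)+R_I$, $R_L\ge I(X;U)-I(Z;U)+R_I$, $R_I\ge0$, $R_S\ge0$. Define $\mathcal{A}_2$ as the set of all tuples $(R_I,R_S,R_J,R_L)$ such that, for some random variables $U,V$ on finite alphabets $\mathcal{U},\mathcal{V}$ with $|\mathcal{U}|\le(|\mathcal{Y}|+2)(|\mathcal{Y}|+3)$ and $|\mathcal{V}|\le|\mathcal{Y}|+3$ forming a Markov chain $Z-X-Y-U-V$, $0\le R_I\le I(Z;V)$, $0\le R_S\le I(Z;U)-I(Z;V)$, $R_J\ge I(Y;U)-I(Z;U)+I(Z;V)$, $R_L\ge I(X;U)-I(Z;U)+I(Z;V)$. Then $\mathcal{A}_1=\mathcal{A}_2$.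
   Context: $P_X$ is a distribution on the finite set $\mathcal{X}$ and $P_{Y|X}$, $P_{Z|X}$ are channels from $\mathcal{X}$ to finite sets $\mathcal{Y}$, $\mathcal{Z}$. $I$ denotes mutual information (base-2 logarithms). *)

theory Defs
  imports Complex_Main
begin

definition mutinf :: "'a set \<Rightarrow> 'b set \<Rightarrow> ('a \<Rightarrow> 'b \<Rightarrow> real) \<Rightarrow> real" where
  "mutinf A B p = (\<Sum>a\<in>A. \<Sum>b\<in>B. if p a b = 0 then 0 else
      p a b * log 2 (p a b / ((\<Sum>b'\<in>B. p a b') * (\<Sum>a'\<in>A. p a' b))))"

definition is_pmf :: "'a set \<Rightarrow> ('a \<Rightarrow> real) \<Rightarrow> bool" where
  "is_pmf A P \<longleftrightarrow> (\<forall>a\<in>A. P a \<ge> 0) \<and> sum P A = 1"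

definition is_channel :: "'a set \<Rightarrow> 'b set \<Rightarrow> ('a \<Rightarrow> 'b \<Rightarrow> real) \<Rightarrow> bool" where
  "is_channel A B W \<longleftrightarrow> (\<forall>a\<in>A. is_pmf B (W a))"

text \<open>The Markov chain Z - X - Y - U (- V) with the
  fixed joint law P_X P_{Y|X} P_{Z|X} means U is produced from Y by a channel Q, and V from U
  by a channel S.\<close>

definition A1 :: "('x::finite \<Rightarrow> real) \<Rightarrow> ('x \<Rightarrow> 'y::finite \<Rightarrow> real) \<Rightarrow> ('x \<Rightarrow> 'z::finite \<Rightarrow> real)
    \<Rightarrow> (real \<times> real \<times> real \<times> real) set" where
  "A1 PX PY PZ = {(RI, RS, RJ, RL). \<exists>k::nat. \<exists>Q :: 'y \<Rightarrow> nat \<Rightarrow> real.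
     k \<le> card (UNIV :: 'y set) + 2 \<and> is_channel UNIV {..<k} Q \<and>
     (let IZU = mutinf UNIV {..<k} (\<lambda>z u. \<Sum>x\<in>UNIV. \<Sum>y\<in>UNIV. PX x * PZ x z * PY x y * Q y u);
          IYU = mutinf UNIV {..<k} (\<lambda>y u. \<Sum>x\<in>UNIV. PX x * PY x y * Q y u);
          IXU = mutinf UNIV {..<k} (\<lambda>x u. \<Sum>y\<in>UNIV. PX x * PY x y * Q y u)
      in RI + RS \<le> IZU \<and> RJ \<ge> IYU - IZU + RI \<and> RL \<ge> IXU - IZU + RI \<and> RI \<ge> 0 \<and> RS \<ge> 0)}"

definition A2 :: "('x::finite \<Rightarrow> real) \<Rightarrow> ('x \<Rightarrow> 'y::finite \<Rightarrow> real) \<Rightarrow> ('x \<Rightarrow> 'z::finite \<Rightarrow> real)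
    \<Rightarrow> (real \<times> real \<times> real \<times> real) set" where
  "A2 PX PY PZ = {(RI, RS, RJ, RL). \<exists>k m::nat. \<exists>Q :: 'y \<Rightarrow> nat \<Rightarrow> real. \<exists>S :: nat \<Rightarrow> nat \<Rightarrow> real.
     k \<le> (card (UNIV :: 'y set) + 2) * (card (UNIV :: 'y set) + 3) \<and> m \<le> card (UNIV :: 'y set) + 3 \<and>
     is_channel UNIV {..<k} Q \<and> is_channel {..<k} {..<m} S \<and>
     (let IZU = mutinf UNIV {..<k} (\<lambda>z u. \<Sum>x\<in>UNIV. \<Sum>y\<in>UNIV. PX x * PZ x z * PY x y * Q y u);
          IZV = mutinf UNIV {..<m} (\<lambda>z v. \<Sum>x\<in>UNIV. \<Sum>y\<in>UNIV. \<Sum>u<k. PX x * PZ x z * PY x y * Q y u * S u v);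
          IYU = mutinf UNIV {..<k} (\<lambda>y u. \<Sum>x\<in>UNIV. PX x * PY x y * Q y u);
          IXU = mutinf UNIV {..<k} (\<lambda>x u. \<Sum>y\<in>UNIV. PX x * PY x y * Q y u)
      in 0 \<le> RI \<and> RI \<le> IZV \<and> 0 \<le> RS \<and> RS \<le> IZU - IZV \<and>
         RJ \<ge> IYU - IZU + IZV \<and> RL \<ge> IXU - IZU + IZV)}"

end

theory Submission
  imports Defs "HOL-Analysis.Analysis"
begin

text \<open>
  The inclusion of A1 in A2 takes V to be an erasure of U: V = U with probability l and
  V = "erased" otherwise. Then I(Z;V) = l I(Z;U), and l = R_I / I(Z;U) yields R_I = I(Z;V).

  For the converse only I(Z;U) and the differences I(Z;U) - I(Y;U), I(Z;U) - I(X;U) matter,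
  since R_I \<le> I(Z;V) and R_S \<le> I(Z;U) - I(Z;V). Mutual information is a sum of one term per
  letter u of U, and reweighting the column u of the channel Q from Y to U by \<beta>(u) \<ge> 0 multiplies
  that term by \<beta>(u) as long as Q stays a channel. Keeping Q a channel and the two differences
  fixed while not decreasing I(Z;U) is a linear program in \<beta> with |Y| + 2 equality constraints,
  so a Caratheodory argument yields a solution supported on at most |Y| + 2 letters.
\<close>

lemma nontrivial_linear_relation:
  fixes v :: "'i \<Rightarrow> 'v::euclidean_space"
  assumes "finite S" and "card S > DIM('v)"
  shows "\<exists>c. (\<exists>u\<in>S. c u \<noteq> 0) \<and> (\<Sum>u\<in>S. c u *\<^sub>R v u) = 0"
proof (cases "inj_on v S")
  case True
  have "dependent (v ` S)"
    by (rule dependent_biggerset) (use True assms in \<open>simp add: card_image\<close>)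
  then obtain w where w: "\<exists>x\<in>v ` S. w x \<noteq> 0" "(\<Sum>x\<in>v ` S. w x *\<^sub>R x) = 0"
    using dependent_finite[of "v ` S"] assms(1) by auto
  have "(\<Sum>u\<in>S. w (v u) *\<^sub>R v u) = 0"
    using w(2) by (simp add: sum.reindex[OF True])
  with w(1) show ?thesis by (intro exI[of _ "w \<circ> v"]) auto
next
  case False
  then obtain a b where ab: "a \<in> S" "b \<in> S" "a \<noteq> b" "v a = v b"
    unfolding inj_on_def by blast
  define c :: "'i \<Rightarrow> real" where "c u = (if u = a then 1 else if u = b then -1 else 0)" for u
  have "(\<Sum>u\<in>S. c u *\<^sub>R v u) = (\<Sum>u\<in>{a, b}. c u *\<^sub>R v u)"
    by (rule sum.mono_neutral_right) (use assms ab in \<open>auto simp: c_def\<close>)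
  also have "\<dots> = 0" using ab by (simp add: c_def)
  finally show ?thesis using ab by (intro exI[of _ c]) (auto simp: c_def)
qed

lemma vanishing_combination_has_negative_coeff:
  fixes v :: "'i \<Rightarrow> 'v::real_inner"
  assumes "finite K" and pos: "\<forall>u\<in>K. v u \<bullet> e > 0"
    and zero: "(\<Sum>u\<in>K. c u *\<^sub>R v u) = 0" and nontrivial: "\<exists>u\<in>K. c u \<noteq> 0"
  shows "\<exists>u\<in>K. c u < 0"
proof (rule ccontr)
  assume "\<not> (\<exists>u\<in>K. c u < 0)"
  then have nonneg: "\<forall>u\<in>K. c u * (v u \<bullet> e) \<ge> 0"
    using pos by (simp add: not_less less_imp_le)
  have "(\<Sum>u\<in>K. c u * (v u \<bullet> e)) = (\<Sum>u\<in>K. c u *\<^sub>R v u) \<bullet> e"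
    by (simp add: inner_sum_left)
  then have "\<forall>u\<in>K. c u * (v u \<bullet> e) = 0"
    using sum_nonneg_eq_0_iff[OF \<open>finite K\<close>, of "\<lambda>u. c u * (v u \<bullet> e)"] nonneg zero
    by simp
  then show False using nontrivial pos by force
qed

lemma exists_step_to_boundary:
  fixes \<alpha> c :: "'i \<Rightarrow> real"
  assumes "finite K" and nonneg: "\<forall>u\<in>K. \<alpha> u \<ge> 0" and "\<exists>u\<in>K. c u < 0"
  shows "\<exists>t\<ge>0. (\<forall>u\<in>K. \<alpha> u + t * c u \<ge> 0) \<and> (\<exists>u\<in>K. c u < 0 \<and> \<alpha> u + t * c u = 0)"
proof -
  define N where "N = {u\<in>K. c u < 0}"
  have N: "finite N" "N \<noteq> {}" using assms by (auto simp: N_def)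
  define t where "t = Min ((\<lambda>u. \<alpha> u / - c u) ` N)"
  have "t \<in> (\<lambda>u. \<alpha> u / - c u) ` N"
    unfolding t_def using N by (intro Min_in) auto
  then obtain u0 where u0: "u0 \<in> N" "t = \<alpha> u0 / - c u0" by blast
  have t0: "t \<ge> 0" using u0 nonneg by (auto simp: N_def divide_nonneg_neg)
  have "\<alpha> u + t * c u \<ge> 0" if "u \<in> K" for u
  proof (cases "c u < 0")
    case True
    then have "t \<le> \<alpha> u / - c u" using N that by (auto simp: t_def N_def)
    then have "t * - c u \<le> \<alpha> u" using True by (subst (asm) pos_le_divide_eq) auto
    then show ?thesis by simp
  next
    case False
    with t0 show ?thesis using nonneg that by simp
  qed
  moreover have "u0 \<in> K" "c u0 < 0" "\<alpha> u0 + t * c u0 = 0" using u0 by (auto simp: N_def)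
  ultimately show ?thesis using t0 by blast
qed

lemma conic_combination_shrink_support:
  fixes v :: "'i \<Rightarrow> 'v::euclidean_space"
  assumes "finite K" and nonneg: "\<forall>u\<in>K. \<alpha> u \<ge> 0" and pos: "\<forall>u\<in>K. v u \<bullet> e > 0"
    and big: "card {u\<in>K. \<alpha> u \<noteq> 0} > DIM('v)"
  shows "\<exists>\<alpha>'. (\<forall>u\<in>K. \<alpha>' u \<ge> 0) \<and> (\<Sum>u\<in>K. \<alpha>' u *\<^sub>R v u) = (\<Sum>u\<in>K. \<alpha> u *\<^sub>R v u)
     \<and> (\<Sum>u\<in>K. \<alpha> u * g u) \<le> (\<Sum>u\<in>K. \<alpha>' u * g u)
     \<and> card {u\<in>K. \<alpha>' u \<noteq> 0} < card {u\<in>K. \<alpha> u \<noteq> 0}"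
proof -
  define S where "S = {u\<in>K. \<alpha> u \<noteq> 0}"
  have S: "finite S" "S \<subseteq> K" using \<open>finite K\<close> by (auto simp: S_def)
  obtain c0 where c0: "\<exists>u\<in>S. c0 u \<noteq> 0" "(\<Sum>u\<in>S. c0 u *\<^sub>R v u) = 0"
    using nontrivial_linear_relation[OF S(1)] big unfolding S_def by blast
  define s :: real where "s = (if (\<Sum>u\<in>S. c0 u * g u) \<ge> 0 then 1 else -1)"
  define c where "c u = (if u \<in> S then s * c0 u else 0)" for u
  have restrict: "(\<Sum>u\<in>K. f u) = (\<Sum>u\<in>S. f u)" if "\<forall>u\<in>K - S. f u = 0"
    for f :: "'i \<Rightarrow> 'b::comm_monoid_add"
    by (rule sum.mono_neutral_right) (use \<open>finite K\<close> S that in auto)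
  have c_relation: "(\<Sum>u\<in>K. c u *\<^sub>R v u) = 0"
    using c0(2) by (simp add: restrict c_def flip: scaleR_scaleR scaleR_sum_right)
  have c_objective: "(\<Sum>u\<in>K. c u * g u) \<ge> 0"
    by (simp add: restrict c_def mult.assoc sum_distrib_left[symmetric] s_def)
  have "\<exists>u\<in>K. c u \<noteq> 0" using c0(1) S by (auto simp: c_def s_def)
  then have "\<exists>u\<in>K. c u < 0"
    using vanishing_combination_has_negative_coeff[OF \<open>finite K\<close> pos c_relation] by blast
  then obtain t u0 where t: "t \<ge> 0" "\<forall>u\<in>K. \<alpha> u + t * c u \<ge> 0"
    and u0: "u0 \<in> K" "c u0 < 0" "\<alpha> u0 + t * c u0 = 0"
    using exists_step_to_boundary[OF \<open>finite K\<close> nonneg] by blast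
  define \<alpha>' where "\<alpha>' u = \<alpha> u + t * c u" for u
  have "(\<Sum>u\<in>K. \<alpha>' u *\<^sub>R v u) = (\<Sum>u\<in>K. \<alpha> u *\<^sub>R v u) + t *\<^sub>R (\<Sum>u\<in>K. c u *\<^sub>R v u)"
    by (simp add: \<alpha>'_def scaleR_add_left sum.distrib scaleR_sum_right)
  then have same_combination: "(\<Sum>u\<in>K. \<alpha>' u *\<^sub>R v u) = (\<Sum>u\<in>K. \<alpha> u *\<^sub>R v u)"
    using c_relation by simp
  have "(\<Sum>u\<in>K. \<alpha>' u * g u) = (\<Sum>u\<in>K. \<alpha> u * g u) + t * (\<Sum>u\<in>K. c u * g u)"
    by (simp add: \<alpha>'_def algebra_simps sum.distrib sum_distrib_left)
  then have objective: "(\<Sum>u\<in>K. \<alpha> u * g u) \<le> (\<Sum>u\<in>K. \<alpha>' u * g u)"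
    using t(1) c_objective by simp
  have "\<alpha>' u = 0" if "u \<in> K" "u \<notin> S" for u
    using that by (simp add: \<alpha>'_def c_def S_def)
  with u0(3) have "{u\<in>K. \<alpha>' u \<noteq> 0} \<subseteq> S - {u0}" by (auto simp: \<alpha>'_def)
  moreover have "u0 \<in> S" using u0(2) by (simp add: c_def split: if_splits)
  ultimately have "card {u\<in>K. \<alpha>' u \<noteq> 0} < card S"
    using S by (meson card_Diff1_less card_mono finite_Diff le_less_trans)
  with t(2) same_combination objective show ?thesis
    by (intro exI[of _ \<alpha>']) (auto simp: \<alpha>'_def S_def)
qed

text \<open>Caratheodory's theorem for cones, with a linear objective that must not decrease.\<close>

lemma conic_combination_reduce_support:
  fixes v :: "'i \<Rightarrow> 'v::euclidean_space"
  assumes "finite K" and "\<forall>u\<in>K. \<alpha> u \<ge> 0" and "\<forall>u\<in>K. v u \<bullet> e > 0"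
  shows "\<exists>\<beta>. (\<forall>u\<in>K. \<beta> u \<ge> 0) \<and> (\<Sum>u\<in>K. \<beta> u *\<^sub>R v u) = (\<Sum>u\<in>K. \<alpha> u *\<^sub>R v u)
     \<and> (\<Sum>u\<in>K. \<alpha> u * g u) \<le> (\<Sum>u\<in>K. \<beta> u * g u)
     \<and> card {u\<in>K. \<beta> u \<noteq> 0} \<le> DIM('v)"
  using assms(2)
proof (induction "card {u\<in>K. \<alpha> u \<noteq> 0}" arbitrary: \<alpha> rule: less_induct)
  case less
  show ?case
  proof (cases "card {u\<in>K. \<alpha> u \<noteq> 0} \<le> DIM('v)")
    case True
    with less.prems show ?thesis by (intro exI[of _ \<alpha>]) auto
  next
    case False
    then obtain \<alpha>' where \<alpha>': "\<forall>u\<in>K. \<alpha>' u \<ge> 0"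
      "(\<Sum>u\<in>K. \<alpha>' u *\<^sub>R v u) = (\<Sum>u\<in>K. \<alpha> u *\<^sub>R v u)"
      "(\<Sum>u\<in>K. \<alpha> u * g u) \<le> (\<Sum>u\<in>K. \<alpha>' u * g u)"
      "card {u\<in>K. \<alpha>' u \<noteq> 0} < card {u\<in>K. \<alpha> u \<noteq> 0}"
      using conic_combination_shrink_support[OF \<open>finite K\<close> less.prems assms(3), of g] by auto
    from less.hyps[OF \<alpha>'(4) \<alpha>'(1)] obtain \<beta> where "\<forall>u\<in>K. \<beta> u \<ge> 0"
      "(\<Sum>u\<in>K. \<beta> u *\<^sub>R v u) = (\<Sum>u\<in>K. \<alpha>' u *\<^sub>R v u)"
      "(\<Sum>u\<in>K. \<alpha>' u * g u) \<le> (\<Sum>u\<in>K. \<beta> u * g u)" "card {u\<in>K. \<beta> u \<noteq> 0} \<le> DIM('v)"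
      by blast
    with \<alpha>'(2,3) show ?thesis by (intro exI[of _ \<beta>]) auto
  qed
qed

definition mutinf_term :: "'a set \<Rightarrow> 'b set \<Rightarrow> ('a \<Rightarrow> 'b \<Rightarrow> real) \<Rightarrow> 'b \<Rightarrow> real" where
  "mutinf_term A B p b = (\<Sum>a\<in>A. if p a b = 0 then 0 else
      p a b * log 2 (p a b / ((\<Sum>b'\<in>B. p a b') * (\<Sum>a'\<in>A. p a' b))))"

lemma mutinf_eq_sum_terms: "mutinf A B p = (\<Sum>b\<in>B. mutinf_term A B p b)"
  unfolding mutinf_def mutinf_term_def by (rule sum.swap)

lemma mutinf_eq_sum_terms_subset:
  assumes "B0 \<subseteq> B" "finite B" and "\<forall>b\<in>B - B0. \<forall>a\<in>A. p a b = 0"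
  shows "mutinf A B p = (\<Sum>b\<in>B0. mutinf_term A B p b)"
  unfolding mutinf_eq_sum_terms
  by (rule sum.mono_neutral_right) (use assms in \<open>auto simp: mutinf_term_def\<close>)

lemma mutinf_term_scale:
  assumes rows: "\<forall>a\<in>A. (\<Sum>j\<in>J. q a j) = (\<Sum>b\<in>B. p a b)"
    and column: "\<forall>a\<in>A. q a j = c * p a b"
  shows "mutinf_term A J q j = c * mutinf_term A B p b"
proof -
  have "c * x / (y * (c * z)) = x / (y * z)" if "c \<noteq> 0" for x y z :: real
    using that by simp
  then show ?thesis
    unfolding mutinf_term_def sum_distrib_left[of c] using rows column
    by (intro sum.cong) (auto simp flip: sum_distrib_left)
qed

definition joint_through :: "'b set \<Rightarrow> ('a \<Rightarrow> 'b \<Rightarrow> real) \<Rightarrow> ('b \<Rightarrow> 'c \<Rightarrow> real) \<Rightarrow> 'a \<Rightarrow> 'c \<Rightarrow> real" where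
  "joint_through B r W a c = (\<Sum>b\<in>B. r a b * W b c)"

lemma sum_joint_through:
  "(\<Sum>c\<in>C. joint_through B r W a c) = (\<Sum>b\<in>B. r a b * (\<Sum>c\<in>C. W b c))"
  unfolding joint_through_def sum_distrib_left by (rule sum.swap)

lemma mutinf_joint_through_reweight:
  assumes rows: "\<forall>b\<in>B. (\<Sum>j\<in>J. \<beta> j * W b (\<sigma> j)) = (\<Sum>u\<in>K. W b u)"
  shows "mutinf A J (joint_through B r (\<lambda>b j. \<beta> j * W b (\<sigma> j)))
    = (\<Sum>j\<in>J. \<beta> j * mutinf_term A K (joint_through B r W) (\<sigma> j))"
  unfolding mutinf_eq_sum_terms
proof (rule sum.cong[OF refl], rule mutinf_term_scale)
  show "\<forall>a\<in>A. (\<Sum>j\<in>J. joint_through B r (\<lambda>b j. \<beta> j * W b (\<sigma> j)) a j)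
      = (\<Sum>u\<in>K. joint_through B r W a u)"
    using rows by (simp add: sum_joint_through)
  show "\<forall>a\<in>A. joint_through B r (\<lambda>b j. \<beta> j * W b (\<sigma> j)) a j
      = \<beta> j * joint_through B r W a (\<sigma> j)" for j
    by (simp add: joint_through_def sum_distrib_left mult.left_commute)
qed

definition mutinf_output :: "('a \<Rightarrow> 'y \<Rightarrow> real) \<Rightarrow> ('y \<Rightarrow> nat \<Rightarrow> real) \<Rightarrow> nat \<Rightarrow> real" where
  "mutinf_output r W n = mutinf UNIV {..<n} (joint_through UNIV r W)"

lemma mutinf_output_eq_sum_support:
  assumes "K \<subseteq> {..<k}" and "\<forall>u\<in>{..<k} - K. \<forall>y. W y u = 0"
  shows "mutinf_output r W k = (\<Sum>u\<in>K. mutinf_term UNIV {..<k} (joint_through UNIV r W) u)"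
  unfolding mutinf_output_def
  by (rule mutinf_eq_sum_terms_subset) (use assms in \<open>auto simp: joint_through_def\<close>)

lemma sum_reindex_support:
  fixes \<beta> f :: "'i \<Rightarrow> real"
  assumes "bij_betw \<sigma> {..<n} {u\<in>K. \<beta> u \<noteq> 0}" and "finite K"
  shows "(\<Sum>j<n. \<beta> (\<sigma> j) * f (\<sigma> j)) = (\<Sum>u\<in>K. \<beta> u * f u)"
proof -
  have "(\<Sum>j<n. \<beta> (\<sigma> j) * f (\<sigma> j)) = (\<Sum>u\<in>{u\<in>K. \<beta> u \<noteq> 0}. \<beta> u * f u)"
    by (rule sum.reindex_bij_betw[OF assms(1)])
  also have "\<dots> = (\<Sum>u\<in>K. \<beta> u * f u)"
    by (rule sum.mono_neutral_left) (use assms(2) in auto)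
  finally show ?thesis .
qed

lemma mutinf_output_reweight:
  assumes "bij_betw \<sigma> {..<n} {u\<in>K. \<beta> u \<noteq> 0}" and "finite K"
    and rows: "\<forall>y. (\<Sum>u\<in>K. \<beta> u * W y u) = (\<Sum>u<k. W y u)"
  shows "mutinf_output r (\<lambda>y j. \<beta> (\<sigma> j) * W y (\<sigma> j)) n
    = (\<Sum>u\<in>K. \<beta> u * mutinf_term UNIV {..<k} (joint_through UNIV r W) u)"
proof -
  have "mutinf_output r (\<lambda>y j. \<beta> (\<sigma> j) * W y (\<sigma> j)) n
      = (\<Sum>j<n. \<beta> (\<sigma> j) * mutinf_term UNIV {..<k} (joint_through UNIV r W) (\<sigma> j))"
    unfolding mutinf_output_def using rows
    by (intro mutinf_joint_through_reweight) (simp add: sum_reindex_support[OF assms(1,2)])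
  then show ?thesis by (simp add: sum_reindex_support[OF assms(1,2)])
qed

lemma is_channel_reweight:
  assumes "bij_betw \<sigma> {..<n} {u\<in>K. \<beta> u \<noteq> 0}" and "finite K"
    and "\<forall>u\<in>K. \<beta> u \<ge> 0" and "\<forall>y. \<forall>u\<in>K. W y u \<ge> 0" and "\<forall>y. (\<Sum>u\<in>K. \<beta> u * W y u) = 1"
  shows "is_channel UNIV {..<n} (\<lambda>y j. \<beta> (\<sigma> j) * W y (\<sigma> j))"
proof -
  have "\<sigma> j \<in> K" if "j < n" for j
    using assms(1) that by (auto simp: bij_betw_def)
  then show ?thesis
    using assms by (auto simp: is_channel_def is_pmf_def sum_reindex_support)
qed

lemma channel_output_cardinality_reduction:
  fixes Q :: "'y::finite \<Rightarrow> nat \<Rightarrow> real"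
    and r0 :: "'a \<Rightarrow> 'y \<Rightarrow> real" and r1 :: "'b \<Rightarrow> 'y \<Rightarrow> real" and r2 :: "'c \<Rightarrow> 'y \<Rightarrow> real"
  assumes "is_channel UNIV {..<k} Q"
  obtains n Q' where "n \<le> CARD('y) + 2" and "is_channel UNIV {..<n} Q'"
    and "mutinf_output r0 Q k \<le> mutinf_output r0 Q' n"
    and "mutinf_output r0 Q' n - mutinf_output r1 Q' n = mutinf_output r0 Q k - mutinf_output r1 Q k"
    and "mutinf_output r0 Q' n - mutinf_output r2 Q' n = mutinf_output r0 Q k - mutinf_output r2 Q k"
proof -
  have Q_nonneg: "\<And>y u. u < k \<Longrightarrow> Q y u \<ge> 0" and Q_rows: "\<And>y. (\<Sum>u<k. Q y u) = 1"
    using assms unfolding is_channel_def is_pmf_def by auto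
  define K where "K = {u\<in>{..<k}. (\<Sum>y\<in>UNIV. Q y u) > 0}"
  have K: "finite K" "K \<subseteq> {..<k}" by (auto simp: K_def)
  have null: "\<forall>u\<in>{..<k} - K. \<forall>y. Q y u = 0"
  proof (intro ballI allI)
    fix u y assume u: "u \<in> {..<k} - K"
    then have "(\<Sum>y\<in>UNIV. Q y u) = 0"
      using Q_nonneg by (auto simp: K_def intro!: antisym sum_nonneg)
    then show "Q y u = 0" using Q_nonneg u by (simp add: sum_nonneg_eq_0_iff)
  qed
  define T0 where "T0 = mutinf_term UNIV {..<k} (joint_through UNIV r0 Q)"
  define T1 where "T1 = mutinf_term UNIV {..<k} (joint_through UNIV r1 Q)"
  define T2 where "T2 = mutinf_term UNIV {..<k} (joint_through UNIV r2 Q)"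
  \<comment> \<open>By homogeneity of the column terms, everything \<beta> has to preserve is linear in \<beta>:
    the row sums of the reweighted channel and the two differences of informations.\<close>
  define v where "v u = ((\<chi> y. Q y u) :: real^'y, T0 u - T1 u, T0 u - T2 u)" for u
  have pos: "\<forall>u\<in>K. v u \<bullet> ((\<chi> y. 1) :: real^'y, 0::real, 0::real) > 0"
    by (auto simp: v_def inner_vec_def K_def)
  obtain \<beta> where \<beta>: "\<forall>u\<in>K. \<beta> u \<ge> 0" "(\<Sum>u\<in>K. \<beta> u *\<^sub>R v u) = (\<Sum>u\<in>K. 1 *\<^sub>R v u)"
    "(\<Sum>u\<in>K. 1 * T0 u) \<le> (\<Sum>u\<in>K. \<beta> u * T0 u)"
    "card {u\<in>K. \<beta> u \<noteq> 0} \<le> DIM((real^'y) \<times> real \<times> real)"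
    using conic_combination_reduce_support[OF K(1) _ pos, where \<alpha>="\<lambda>_. 1" and g=T0] by auto
  have "\<forall>y. (\<Sum>u\<in>K. \<beta> u * Q y u) = (\<Sum>u\<in>K. Q y u)"
    using arg_cong[OF \<beta>(2), of "\<lambda>w. fst w $ _"] by (simp add: fst_sum v_def)
  moreover have "(\<Sum>u\<in>K. Q y u) = (\<Sum>u<k. Q y u)" for y
    by (rule sum.mono_neutral_left) (use K null in auto)
  ultimately have rows: "\<forall>y. (\<Sum>u\<in>K. \<beta> u * Q y u) = (\<Sum>u<k. Q y u)" by simp
  have diff1: "(\<Sum>u\<in>K. \<beta> u * (T0 u - T1 u)) = (\<Sum>u\<in>K. T0 u - T1 u)"
    and diff2: "(\<Sum>u\<in>K. \<beta> u * (T0 u - T2 u)) = (\<Sum>u\<in>K. T0 u - T2 u)"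
    using arg_cong[OF \<beta>(2), of "fst \<circ> snd"] arg_cong[OF \<beta>(2), of "snd \<circ> snd"]
    by (simp_all add: fst_sum snd_sum v_def)
  define n where "n = card {u\<in>K. \<beta> u \<noteq> 0}"
  obtain \<sigma> where \<sigma>: "bij_betw \<sigma> {..<n} {u\<in>K. \<beta> u \<noteq> 0}"
    using ex_bij_betw_nat_finite[of "{u\<in>K. \<beta> u \<noteq> 0}"] K by (auto simp: n_def atLeast0LessThan)
  define Q' where "Q' y j = \<beta> (\<sigma> j) * Q y (\<sigma> j)" for y j
  have "is_channel UNIV {..<n} Q'"
    unfolding Q'_def using \<sigma> K \<beta>(1) Q_nonneg rows Q_rows by (intro is_channel_reweight) auto
  moreover have "mutinf_output r0 Q k = (\<Sum>u\<in>K. T0 u)" "mutinf_output r1 Q k = (\<Sum>u\<in>K. T1 u)"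
    "mutinf_output r2 Q k = (\<Sum>u\<in>K. T2 u)"
    unfolding T0_def T1_def T2_def using K null by (auto intro: mutinf_output_eq_sum_support)
  moreover have "mutinf_output r0 Q' n = (\<Sum>u\<in>K. \<beta> u * T0 u)" "mutinf_output r1 Q' n = (\<Sum>u\<in>K. \<beta> u * T1 u)"
    "mutinf_output r2 Q' n = (\<Sum>u\<in>K. \<beta> u * T2 u)"
    unfolding Q'_def T0_def T1_def T2_def using \<sigma> K(1) rows by (auto intro: mutinf_output_reweight)
  moreover have "n \<le> CARD('y) + 2" using \<beta>(4) by (simp add: n_def)
  ultimately show ?thesis
    using that \<beta>(3) diff1 diff2 by (simp add: sum_subtractf right_diff_distrib)
qed

definition erasure_channel :: "nat \<Rightarrow> real \<Rightarrow> nat \<Rightarrow> nat \<Rightarrow> real" where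
  "erasure_channel k l u v = (if v = k then 1 - l else if v = u then l else 0)"

lemma sum_erasure_channel: "u < k \<Longrightarrow> (\<Sum>v<Suc k. erasure_channel k l u v) = 1"
  by (simp add: erasure_channel_def sum.If_cases lessThan_Suc)

lemma is_channel_erasure_channel:
  "0 \<le> l \<Longrightarrow> l \<le> 1 \<Longrightarrow> is_channel {..<k} {..<Suc k} (erasure_channel k l)"
  by (auto simp: is_channel_def is_pmf_def sum_erasure_channel simp del: sum.lessThan_Suc)
    (simp add: erasure_channel_def)

lemma mutinf_erasure:
  assumes total: "(\<Sum>a\<in>A. \<Sum>u<k. p a u) = 1"
  shows "mutinf A {..<Suc k} (joint_through {..<k} p (erasure_channel k l)) = l * mutinf A {..<k} p"
proof -
  define q where "q = joint_through {..<k} p (erasure_channel k l)"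
  have rows: "(\<Sum>v<Suc k. q a v) = (\<Sum>u<k. p a u)" for a
    by (simp add: q_def sum_joint_through sum_erasure_channel del: sum.lessThan_Suc)
  have kept: "q a v = l * p a v" if "v < k" for a v
    using that by (simp add: q_def joint_through_def erasure_channel_def if_distrib cong: if_cong)
  have erased: "q a k = (1 - l) * (\<Sum>u<k. p a u)" for a
    by (simp add: q_def joint_through_def erasure_channel_def sum_distrib_left mult.commute)
  then have "(\<Sum>a\<in>A. q a k) = 1 - l"
    using total by (simp flip: sum_distrib_left)
  then have "mutinf_term A {..<Suc k} q k = 0"
    unfolding mutinf_term_def rows erased by (intro sum.neutral) auto
  moreover have "mutinf_term A {..<Suc k} q v = l * mutinf_term A {..<k} p v" if "v < k" for v
    using rows kept that by (intro mutinf_term_scale) auto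
  ultimately show ?thesis
    unfolding q_def[symmetric] mutinf_eq_sum_terms by (simp add: sum_distrib_left)
qed

definition joint_ZY :: "('x::finite \<Rightarrow> real) \<Rightarrow> ('x \<Rightarrow> 'y \<Rightarrow> real) \<Rightarrow> ('x \<Rightarrow> 'z \<Rightarrow> real) \<Rightarrow> 'z \<Rightarrow> 'y \<Rightarrow> real"
  where "joint_ZY PX PY PZ z y = (\<Sum>x\<in>UNIV. PX x * PZ x z * PY x y)"

definition joint_XY :: "('x \<Rightarrow> real) \<Rightarrow> ('x \<Rightarrow> 'y \<Rightarrow> real) \<Rightarrow> 'x \<Rightarrow> 'y \<Rightarrow> real"
  where "joint_XY PX PY x y = PX x * PY x y"

text \<open>The law of the pair (Y, Y): it writes I(Y;U) in the same form as I(Z;U) and I(X;U).\<close>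

definition joint_YY :: "('x::finite \<Rightarrow> real) \<Rightarrow> ('x \<Rightarrow> 'y::finite \<Rightarrow> real) \<Rightarrow> 'y \<Rightarrow> 'y \<Rightarrow> real"
  where "joint_YY PX PY y' y = (if y' = y then \<Sum>x\<in>UNIV. PX x * PY x y else 0)"

lemma joint_through_joint_ZY:
  "joint_through UNIV (joint_ZY PX PY PZ) Q
    = (\<lambda>z u. \<Sum>x\<in>UNIV. \<Sum>y\<in>UNIV. PX x * PZ x z * PY x y * Q y u)"
  unfolding fun_eq_iff joint_through_def joint_ZY_def sum_distrib_right by (auto intro: sum.swap)

lemma joint_through_joint_XY:
  "joint_through UNIV (joint_XY PX PY) Q = (\<lambda>x u. \<Sum>y\<in>UNIV. PX x * PY x y * Q y u)"
  by (simp add: fun_eq_iff joint_through_def joint_XY_def)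

lemma joint_through_joint_YY:
  "joint_through UNIV (joint_YY PX PY) Q = (\<lambda>y u. \<Sum>x\<in>UNIV. PX x * PY x y * Q y u)"
  by (simp add: fun_eq_iff joint_through_def joint_YY_def sum_distrib_right if_distrib[of "\<lambda>t. t * _"]
    cong: if_cong)

lemma joint_through_joint_ZU:
  "joint_through {..<k} (\<lambda>z u. \<Sum>x\<in>UNIV. \<Sum>y\<in>UNIV. PX x * PZ x z * PY x y * Q y u) S
    = (\<lambda>z v. \<Sum>x\<in>UNIV. \<Sum>y\<in>UNIV. \<Sum>u<k. PX x * PZ x z * PY x y * Q y u * S u v)"
  by (simp add: fun_eq_iff joint_through_def sum_distrib_right sum.swap[where A="{..<k}"])

lemma A1_eq:
  "A1 PX PY PZ = {(RI, RS, RJ, RL). \<exists>k Q. k \<le> CARD('y) + 2 \<and> is_channel UNIV {..<k} Q \<and>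
     RI + RS \<le> mutinf_output (joint_ZY PX PY PZ) Q k \<and>
     RJ \<ge> mutinf_output (joint_YY PX PY) Q k - mutinf_output (joint_ZY PX PY PZ) Q k + RI \<and>
     RL \<ge> mutinf_output (joint_XY PX PY) Q k - mutinf_output (joint_ZY PX PY PZ) Q k + RI \<and>
     RI \<ge> 0 \<and> RS \<ge> 0}"
  for PY :: "'x::finite \<Rightarrow> 'y::finite \<Rightarrow> real"
  unfolding A1_def mutinf_output_def joint_through_joint_ZY joint_through_joint_YY
    joint_through_joint_XY Let_def ..

lemma A2_eq:
  "A2 PX PY PZ = {(RI, RS, RJ, RL). \<exists>k m Q S.
     k \<le> (CARD('y) + 2) * (CARD('y) + 3) \<and> m \<le> CARD('y) + 3 \<and>
     is_channel UNIV {..<k} Q \<and> is_channel {..<k} {..<m} S \<and>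
     (let IZU = mutinf_output (joint_ZY PX PY PZ) Q k;
          IZV = mutinf UNIV {..<m} (joint_through {..<k} (joint_through UNIV (joint_ZY PX PY PZ) Q) S)
      in 0 \<le> RI \<and> RI \<le> IZV \<and> 0 \<le> RS \<and> RS \<le> IZU - IZV \<and>
         RJ \<ge> mutinf_output (joint_YY PX PY) Q k - IZU + IZV \<and>
         RL \<ge> mutinf_output (joint_XY PX PY) Q k - IZU + IZV)}"
  for PY :: "'x::finite \<Rightarrow> 'y::finite \<Rightarrow> real"
  unfolding A2_def mutinf_output_def joint_through_joint_ZY joint_through_joint_ZU
    joint_through_joint_YY joint_through_joint_XY Let_def ..

lemma sum_joint_ZY:
  assumes "is_pmf UNIV PX" and "is_channel UNIV UNIV PY" and "is_channel UNIV UNIV PZ"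
  shows "(\<Sum>z\<in>UNIV. \<Sum>y\<in>UNIV. joint_ZY PX PY PZ z y) = 1"
proof -
  have "(\<Sum>z\<in>UNIV. \<Sum>y\<in>UNIV. joint_ZY PX PY PZ z y)
      = (\<Sum>z\<in>UNIV. \<Sum>x\<in>UNIV. \<Sum>y\<in>UNIV. PX x * PZ x z * PY x y)"
    unfolding joint_ZY_def by (intro sum.cong refl sum.swap)
  also have "\<dots> = (\<Sum>x\<in>UNIV. \<Sum>z\<in>UNIV. \<Sum>y\<in>UNIV. PX x * PZ x z * PY x y)"
    by (rule sum.swap)
  also have "\<dots> = 1"
    using assms by (simp add: is_channel_def is_pmf_def flip: sum_distrib_left)
  finally show ?thesis .
qed

lemma A1_subset_A2:
  fixes PX :: "'x::finite \<Rightarrow> real" and PY :: "'x \<Rightarrow> 'y::finite \<Rightarrow> real"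
    and PZ :: "'x \<Rightarrow> 'z::finite \<Rightarrow> real"
  assumes "is_pmf UNIV PX" and "is_channel UNIV UNIV PY" and "is_channel UNIV UNIV PZ"
  shows "A1 PX PY PZ \<subseteq> A2 PX PY PZ"
proof
  fix t assume "t \<in> A1 PX PY PZ"
  then obtain RI RS RJ RL k Q where t: "t = (RI, RS, RJ, RL)" and k: "k \<le> CARD('y) + 2"
    and Q: "is_channel UNIV {..<k} Q" and bounds: "RI + RS \<le> mutinf_output (joint_ZY PX PY PZ) Q k"
      "RJ \<ge> mutinf_output (joint_YY PX PY) Q k - mutinf_output (joint_ZY PX PY PZ) Q k + RI"
      "RL \<ge> mutinf_output (joint_XY PX PY) Q k - mutinf_output (joint_ZY PX PY PZ) Q k + RI"
      "RI \<ge> 0" "RS \<ge> 0"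
    unfolding A1_eq by auto
  define IZU where "IZU = mutinf_output (joint_ZY PX PY PZ) Q k"
  define l where "l = (if IZU = 0 then 0 else RI / IZU)"
  have l: "0 \<le> l" "l \<le> 1" "l * IZU = RI"
    using bounds by (auto simp: l_def IZU_def divide_le_eq_1)
  have "(\<Sum>z\<in>UNIV. \<Sum>u<k. joint_through UNIV (joint_ZY PX PY PZ) Q z u) = 1"
    using Q sum_joint_ZY[OF assms] by (simp add: sum_joint_through is_channel_def is_pmf_def)
  then have "mutinf UNIV {..<Suc k}
      (joint_through {..<k} (joint_through UNIV (joint_ZY PX PY PZ) Q) (erasure_channel k l)) = RI"
    using l by (simp add: mutinf_erasure IZU_def mutinf_output_def)
  moreover have "k \<le> (CARD('y) + 2) * (CARD('y) + 3)" using k by (simp add: algebra_simps)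
  ultimately show "t \<in> A2 PX PY PZ"
    unfolding A2_eq t Let_def mem_Collect_eq case_prod_conv
    using k Q bounds is_channel_erasure_channel[OF l(1,2)]
    by (intro exI[of _ k] exI[of _ "Suc k"] exI[of _ Q] exI[of _ "erasure_channel k l"])
      (simp add: IZU_def)
qed

lemma A2_subset_A1:
  fixes PX :: "'x::finite \<Rightarrow> real" and PY :: "'x \<Rightarrow> 'y::finite \<Rightarrow> real"
    and PZ :: "'x \<Rightarrow> 'z::finite \<Rightarrow> real"
  shows "A2 PX PY PZ \<subseteq> A1 PX PY PZ"
proof
  fix t assume "t \<in> A2 PX PY PZ"
  moreover obtain RI RS RJ RL where t: "t = (RI, RS, RJ, RL)" by (cases t)
  ultimately obtain k m :: nat and Q S where Q: "is_channel UNIV {..<k} Q"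
    and "let IZU = mutinf_output (joint_ZY PX PY PZ) Q k;
          IZV = mutinf UNIV {..<m} (joint_through {..<k} (joint_through UNIV (joint_ZY PX PY PZ) Q) S)
      in 0 \<le> RI \<and> RI \<le> IZV \<and> 0 \<le> RS \<and> RS \<le> IZU - IZV \<and>
         RJ \<ge> mutinf_output (joint_YY PX PY) Q k - IZU + IZV \<and>
         RL \<ge> mutinf_output (joint_XY PX PY) Q k - IZU + IZV"
    unfolding t A2_eq mem_Collect_eq case_prod_conv by blast
  then have bounds: "RI + RS \<le> mutinf_output (joint_ZY PX PY PZ) Q k"
    "RJ \<ge> mutinf_output (joint_YY PX PY) Q k - mutinf_output (joint_ZY PX PY PZ) Q k + RI"
    "RL \<ge> mutinf_output (joint_XY PX PY) Q k - mutinf_output (joint_ZY PX PY PZ) Q k + RI"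
    "RI \<ge> 0" "RS \<ge> 0"
    unfolding Let_def by auto
  obtain n Q' where "n \<le> CARD('y) + 2" "is_channel UNIV {..<n} Q'"
    "mutinf_output (joint_ZY PX PY PZ) Q k \<le> mutinf_output (joint_ZY PX PY PZ) Q' n"
    "mutinf_output (joint_ZY PX PY PZ) Q' n - mutinf_output (joint_YY PX PY) Q' n
      = mutinf_output (joint_ZY PX PY PZ) Q k - mutinf_output (joint_YY PX PY) Q k"
    "mutinf_output (joint_ZY PX PY PZ) Q' n - mutinf_output (joint_XY PX PY) Q' n
      = mutinf_output (joint_ZY PX PY PZ) Q k - mutinf_output (joint_XY PX PY) Q k"
    by (rule channel_output_cardinality_reduction[OF Q])
  then show "t \<in> A1 PX PY PZ"
    unfolding A1_eq t mem_Collect_eq case_prod_conv using bounds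
    by (intro exI[of _ n] exI[of _ Q']) linarith
qed

theorem mainTheorem2:
  fixes PX :: "'x::finite \<Rightarrow> real" and PY :: "'x \<Rightarrow> 'y::finite \<Rightarrow> real"
    and PZ :: "'x \<Rightarrow> 'z::finite \<Rightarrow> real"
  assumes "is_pmf UNIV PX" and "is_channel UNIV UNIV PY" and "is_channel UNIV UNIV PZ"
  shows "A1 PX PY PZ = A2 PX PY PZ"
  using A1_subset_A2[OF assms] A2_subset_A1 by (rule equalityI)

end
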